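(* Let $\mathfrak{g}$ be an SRN under the Single-Objective Framework, with common storage $s$, common data size $d$, common budget $b$, and link cost $c$. Then $\mathfrak{g}$ is bilaterally stable with storage and budget constraints if and only if the following holds. For every pair of distinct agents $i,j$ with $\langle ij\rangle\notin\mathfrak{g}$: if $b-c\,\eta_i(\mathfrak{g})\ge c$ and $s-d\,\eta_j(\mathfrak{g})\ge d$, then $b-c\,\eta_j(\mathfrak{g})<c$ or $s-d\,\eta_i(\mathfrak{g})<d$.
   Context: A social storage network is a simple undirected graph $\mathfrak{g}$ on a finite set of agents; $\eta_i(\mathfrak{g})$ is the number of neighbours of $i$. The networks $\mathfrak{g}\pm\langle ij\rangle$ are obtained by adding or removing the link $\langle ij\rangle$. In the Single-Objective Framework the utility of agent $i$ is $u_i(\mathfrak{g})=\beta_i(1-\lambda^{\eta_i(\mathfrak{g})})$, where $\beta_i>0$ is the worth of $i$'s data and $\lambda\in(0,1)$ is the disk failure rate. An SRN (symmetric resource network) is such a network where every agent $i$ has: - offered storage $s_i=s$; - data size $d_i=d$; - budget $b_i=b$. The per-link cost is $c$. Remaining storage is $RS_i=s_i-\sum_{j\text{ neighbour of }i}d_j$ and remaining budget is $RB_i=b_i-c\,\eta_i(\mathfrak{g})$. $\mathfrak{g}$ is bilaterally stable with storage and budget constraints if both of the following hold. 1. For every link $\langle ij\rangle\in\mathfrak{g}$: if $u_i(\mathfrak{g}-\langle ij\rangle)>u_i(\mathfrak{g})$, then $u_j(\mathfrak{g}-\langle ij\rangle)<u_j(\mathfrak{g})$. 2. For every non-link $\langle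 ij\rangle$: if $u_i(\mathfrak{g}+\langle ij\rangle)>u_i(\mathfrak{g})$ and $RS_j\ge d_i$ and $RB_i\ge c$, then $u_j(\mathfrak{g}+\langle ij\rangle)<u_j(\mathfrak{g})$ or $RS_i<d_j$ or $RB_j<c$. *)

theory Defs
  imports Main Complex_Main
begin

definition network :: "'a set \<Rightarrow> 'a set set \<Rightarrow> bool" where
  "network N g \<longleftrightarrow> finite N \<and> (\<forall>e\<in>g. \<exists>i j. e = {i, j} \<and> i \<in> N \<and> j \<in> N \<and> i \<noteq> j)"

definition neighbours :: "'a set \<Rightarrow> 'a set set \<Rightarrow> 'a \<Rightarrow> 'a set" where
  "neighbours N g i = {j \<in> N. j \<noteq> i \<and> {i, j} \<in> g}"

definition eta :: "'a set \<Rightarrow> 'a set set \<Rightarrow> 'a \<Rightarrow> nat" where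
  "eta N g i = card (neighbours N g i)"

definition add_link :: "'a set set \<Rightarrow> 'a \<Rightarrow> 'a \<Rightarrow> 'a set set" where
  "add_link g i j = insert {i, j} g"

definition del_link :: "'a set set \<Rightarrow> 'a \<Rightarrow> 'a \<Rightarrow> 'a set set" where
  "del_link g i j = g - {{i, j}}"

definition sof_utility :: "'a set \<Rightarrow> ('a \<Rightarrow> real) \<Rightarrow> real \<Rightarrow> 'a set set \<Rightarrow> 'a \<Rightarrow> real" where
  "sof_utility N \<beta> lam g i = \<beta> i * (1 - lam ^ eta N g i)"

definition remaining_storage :: "'a set \<Rightarrow> ('a \<Rightarrow> real) \<Rightarrow> ('a \<Rightarrow> real) \<Rightarrow> 'a set set \<Rightarrow> 'a \<Rightarrow> real" where
  "remaining_storage N s d g i = s i - (\<Sum>j\<in>neighbours N g i. d j)"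

definition remaining_budget :: "'a set \<Rightarrow> ('a \<Rightarrow> real) \<Rightarrow> real \<Rightarrow> 'a set set \<Rightarrow> 'a \<Rightarrow> real" where
  "remaining_budget N b c g i = b i - c * real (eta N g i)"

definition bilaterally_stable_sb ::
  "'a set \<Rightarrow> ('a set set \<Rightarrow> 'a \<Rightarrow> real) \<Rightarrow> ('a \<Rightarrow> real) \<Rightarrow> ('a \<Rightarrow> real) \<Rightarrow> ('a \<Rightarrow> real)
    \<Rightarrow> real \<Rightarrow> 'a set set \<Rightarrow> bool" where
  "bilaterally_stable_sb N u s d b c g \<longleftrightarrow>
     (\<forall>i\<in>N. \<forall>j\<in>N. i \<noteq> j \<longrightarrow> {i, j} \<in> g \<longrightarrow>
        u (del_link g i j) i > u g i \<longrightarrow> u (del_link g i j) j < u g j) \<and>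
     (\<forall>i\<in>N. \<forall>j\<in>N. i \<noteq> j \<longrightarrow> {i, j} \<notin> g \<longrightarrow>
        (u (add_link g i j) i > u g i \<and> remaining_storage N s d g j \<ge> d i
           \<and> remaining_budget N b c g i \<ge> c) \<longrightarrow>
        (u (add_link g i j) j < u g j \<or> remaining_storage N s d g i < d j
           \<or> remaining_budget N b c g j < c))"

end

theory Submission
  imports Defs
begin

text \<open>Under the Single-Objective Framework utility is strictly increasing in the degree, so
  removing a link always hurts both endpoints and adding one always benefits both. The first
  stability condition therefore holds vacuously, the utility clauses of the second one are
  decided, and only the storage and budget constraints remain; with symmetric resources these
  are \<open>s - d \<eta>\<close> and \<open>b - c \<eta>\<close>.\<close>

lemma neighbours_add_link:
  assumes "j \<in> N" "i \<noteq> j"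
  shows "neighbours N (add_link g i j) i = insert j (neighbours N g i)"
  using assms by (auto simp: neighbours_def add_link_def doubleton_eq_iff)

lemma neighbours_del_link:
  "neighbours N (del_link g i j) i = neighbours N g i - {j}"
  by (auto simp: neighbours_def del_link_def doubleton_eq_iff)

lemma eta_add_link:
  assumes "finite N" "j \<in> N" "i \<noteq> j" "{i, j} \<notin> g"
  shows "eta N (add_link g i j) i = Suc (eta N g i)"
proof -
  have "j \<notin> neighbours N g i"
    using assms by (simp add: neighbours_def)
  moreover have "finite (neighbours N g i)"
    using assms(1) by (simp add: neighbours_def)
  ultimately show ?thesis
    using assms by (simp add: eta_def neighbours_add_link)
qed

lemma eta_del_link_less:
  assumes "finite N" "j \<in> N" "i \<noteq> j" "{i, j} \<in> g"
  shows "eta N (del_link g i j) i < eta N g i"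
proof -
  have "finite (neighbours N g i)"
    using assms(1) by (simp add: neighbours_def)
  moreover have "j \<in> neighbours N g i"
    using assms by (simp add: neighbours_def)
  ultimately show ?thesis
    unfolding eta_def neighbours_del_link by (rule card_Diff1_less)
qed

lemma add_link_commute: "add_link g i j = add_link g j i"
  by (simp add: add_link_def insert_commute)

lemma sof_utility_strict_mono:
  assumes "\<beta> i > 0" "0 < lam" "lam < 1" "eta N g' i < eta N g i"
  shows "sof_utility N \<beta> lam g' i < sof_utility N \<beta> lam g i"
proof -
  have "lam ^ eta N g i < lam ^ eta N g' i"
    using assms by (simp add: power_strict_decreasing)
  then show ?thesis
    using assms(1) by (simp add: sof_utility_def)
qed

lemma sof_utility_del_link_less:
  assumes "finite N" "\<beta> i > 0" "0 < lam" "lam < 1" "j \<in> N" "i \<noteq> j" "{i, j} \<in> g"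
  shows "sof_utility N \<beta> lam (del_link g i j) i < sof_utility N \<beta> lam g i"
  using assms by (auto intro!: sof_utility_strict_mono eta_del_link_less)

lemma sof_utility_add_link_greater:
  assumes "finite N" "\<beta> i > 0" "0 < lam" "lam < 1" "j \<in> N" "i \<noteq> j" "{i, j} \<notin> g"
  shows "sof_utility N \<beta> lam (add_link g i j) i > sof_utility N \<beta> lam g i"
  using assms by (auto intro!: sof_utility_strict_mono simp: eta_add_link)

lemma remaining_storage_uniform:
  "remaining_storage N (\<lambda>_. s) (\<lambda>_. d) g i = s - d * real (eta N g i)"
  by (simp add: remaining_storage_def eta_def)

lemma bilaterally_stable_sb_iff_if_links_beneficial:
  assumes del: "\<And>i j. i \<in> N \<Longrightarrow> j \<in> N \<Longrightarrow> i \<noteq> j \<Longrightarrow> {i, j} \<in> g \<Longrightarrow>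
      u (del_link g i j) i < u g i"
    and add: "\<And>i j. i \<in> N \<Longrightarrow> j \<in> N \<Longrightarrow> i \<noteq> j \<Longrightarrow> {i, j} \<notin> g \<Longrightarrow>
      u (add_link g i j) i > u g i"
  shows "bilaterally_stable_sb N u s d b c g \<longleftrightarrow>
    (\<forall>i\<in>N. \<forall>j\<in>N. i \<noteq> j \<longrightarrow> {i, j} \<notin> g \<longrightarrow>
       (remaining_budget N b c g i \<ge> c \<and> remaining_storage N s d g j \<ge> d i) \<longrightarrow>
       (remaining_budget N b c g j < c \<or> remaining_storage N s d g i < d j))"
proof -
  let ?RS = "remaining_storage N s d g" and ?RB = "remaining_budget N b c g"
  have no_profitable_deletion:
    "\<forall>i\<in>N. \<forall>j\<in>N. i \<noteq> j \<longrightarrow> {i, j} \<in> g \<longrightarrow>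
       u (del_link g i j) i > u g i \<longrightarrow> u (del_link g i j) j < u g j"
    using del by (meson less_asym)
  have add_other: "u (add_link g i j) j > u g j"
    if "i \<in> N" "j \<in> N" "i \<noteq> j" "{i, j} \<notin> g" for i j
    using add[of j i] that by (simp add: add_link_commute insert_commute)
  have addition_clause_iff:
    "(u (add_link g i j) i > u g i \<and> ?RS j \<ge> d i \<and> ?RB i \<ge> c \<longrightarrow>
       u (add_link g i j) j < u g j \<or> ?RS i < d j \<or> ?RB j < c) \<longleftrightarrow>
     (?RB i \<ge> c \<and> ?RS j \<ge> d i \<longrightarrow> ?RB j < c \<or> ?RS i < d j)"
    if "i \<in> N" "j \<in> N" "i \<noteq> j" "{i, j} \<notin> g" for i j
    using add[OF that] add_other[OF that] by auto
  have "bilaterally_stable_sb N u s d b c g \<longleftrightarrow>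
    (\<forall>i\<in>N. \<forall>j\<in>N. i \<noteq> j \<longrightarrow> {i, j} \<notin> g \<longrightarrow>
       (u (add_link g i j) i > u g i \<and> ?RS j \<ge> d i \<and> ?RB i \<ge> c \<longrightarrow>
        u (add_link g i j) j < u g j \<or> ?RS i < d j \<or> ?RB j < c))"
    unfolding bilaterally_stable_sb_def using no_profitable_deletion by blast
  also have "\<dots> \<longleftrightarrow>
    (\<forall>i\<in>N. \<forall>j\<in>N. i \<noteq> j \<longrightarrow> {i, j} \<notin> g \<longrightarrow>
       (?RB i \<ge> c \<and> ?RS j \<ge> d i) \<longrightarrow> (?RB j < c \<or> ?RS i < d j))"
    by (intro ball_cong imp_cong[OF refl] refl addition_clause_iff) assumption+
  finally show ?thesis .
qed

theorem theorem3:
  fixes N :: "'a set" and g :: "'a set set" and \<beta> :: "'a \<Rightarrow> real"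
    and lam s d b c :: real
  assumes "network N g"
    and "\<forall>i\<in>N. \<beta> i > 0"
    and "0 < lam" and "lam < 1"
  shows "bilaterally_stable_sb N (sof_utility N \<beta> lam) (\<lambda>_. s) (\<lambda>_. d) (\<lambda>_. b) c g \<longleftrightarrow>
    (\<forall>i\<in>N. \<forall>j\<in>N. i \<noteq> j \<longrightarrow> {i, j} \<notin> g \<longrightarrow>
       (b - c * real (eta N g i) \<ge> c \<and> s - d * real (eta N g j) \<ge> d) \<longrightarrow>
       (b - c * real (eta N g j) < c \<or> s - d * real (eta N g i) < d))"
proof -
  have "finite N"
    using assms(1) by (simp add: network_def)
  then show ?thesis
    using assms(2-4)
    by (subst bilaterally_stable_sb_iff_if_links_beneficial)
      (simp_all add: sof_utility_del_link_less sof_utility_add_link_greater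
        remaining_storage_uniform remaining_budget_def)
qed

end
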